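(* Let $d$ and $n$ be odd positive integers such that $n \ge \max\{5(d+1)/2,\ 2d+7\}$. Then there are spherical 3-designs of size $n$ on $S^d$.
   Context: $S^d$ is the unit sphere in $\mathbb{R}^{d+1}$. A spherical $t$-design of size $n$ on $S^d$ is a collection $X$ of $n$ points of $S^d$ such that for every polynomial of degree at most $t$ its average over $S^d$ (surface measure) equals $\frac1{|X|}\sum_{x\in X}f(x)$. *)

theory Defs
  imports "HOL-Analysis.Analysis"
begin

text \<open>Points of R^(d+1) are vectors real^'n with CARD('n) = d+1; S^d is sphere 0 1.\<close>

definition poly_deg_le :: "nat \<Rightarrow> (real^'n \<Rightarrow> real) \<Rightarrow> bool" where
  "poly_deg_le t f \<longleftrightarrow>
     (\<exists>(A :: ('n \<Rightarrow> nat) set) (c :: ('n \<Rightarrow> nat) \<Rightarrow> real).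
        finite A \<and> (\<forall>a\<in>A. sum a UNIV \<le> t) \<and>
        f = (\<lambda>x. \<Sum>a\<in>A. c a * (\<Prod>i\<in>UNIV. (x $ i) ^ (a i))))"

text \<open>Average of f over the unit sphere w.r.t. normalized surface measure,
  realized as the (normalized) cone measure: average of f(x/|x|) over the unit ball.\<close>
definition sphere_avg :: "(real^'n \<Rightarrow> real) \<Rightarrow> real" where
  "sphere_avg f = integral (ball 0 1) (\<lambda>x. f (x /\<^sub>R norm x)) / measure lebesgue (ball (0::real^'n) 1)"

definition spherical_design :: "nat \<Rightarrow> (real^'n) set \<Rightarrow> bool" where
  "spherical_design t X \<longleftrightarrow>
     finite X \<and> X \<noteq> {} \<and> X \<subseteq> sphere 0 1 \<and>
     (\<forall>f. poly_deg_le t f \<longrightarrow> (\<Sum>x\<in>X. f x) / real (card X) = sphere_avg f)"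

end

theory Submission
  imports Defs
begin

(* The sphere is invariant under reflections and permutations of the coordinates, so on S^(m-1)
   the averages of x_i, x_i x_j (i \<noteq> j) and x_i x_j x_k vanish and the average of x_i^2 is 1/m.
   Hence a finite X on the sphere is a 3-design as soon as its first and third moments vanish and
   sum_{x in X} x_i x_j = |X|/m delta_ij.

   For m = d + 1 = 2r and n = 2N + 5 take X = P \<union> F \<union> -F, where P is a regular pentagon in the
   plane of the first two coordinates and the j-th point of F has the coordinate pairs
   rho_s (cos, sin)(q_s theta_j), with theta_j = pi (2j+1)/(2N) and the distinct odd frequencies
   q_s = 1, 3, ..., 2r-1.  The pairs \<plusminus>F_j cancel all odd moments of F \<union> -F, the pentagon has vanishing
   first and third moments, and since the q_s are odd and below N, the trigonometric system is
   orthogonal on the midpoint grid theta_j, which makes the second moments diagonal.  The radii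
   rho_s make every diagonal second moment equal to n/(2r); in the first plane they compensate
   the pentagon's contribution 5/2, which needs n \<ge> 5r, while 2r \<le> N is the orthogonality
   condition. *)

section \<open>Trigonometric sums\<close>

lemma sum_cis_arith_progression_eq_0:
  fixes N :: nat and p :: int
  assumes "N > 0" "\<not> int N dvd p"
  shows "(\<Sum>j<N. cis (2*pi*p*j/N + \<phi>)) = 0"
proof -
  define \<omega> where "\<omega> = cis (2*pi*p/N)"
  have "\<omega> \<noteq> 1"
  proof
    assume "\<omega> = 1"
    then obtain k :: int where "2*pi*p/N = k * 2 * pi"
      by (auto simp: \<omega>_def complex_eq_iff cos_one_2pi_int)
    then have "real_of_int p = real N * k" using assms(1) by (simp add: field_simps)
    then have "p = int N * k" by (metis of_int_eq_iff of_int_mult of_int_of_nat_eq)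
    then show False using assms(2) by simp
  qed
  moreover have "\<omega> ^ N = 1"
    using assms(1) unfolding \<omega>_def Complex.DeMoivre by (simp add: complex_eq_iff cos_one_2pi_int)
  moreover have "(\<Sum>j<N. cis (2*pi*p*j/N + \<phi>)) = cis \<phi> * (\<Sum>j<N. \<omega> ^ j)"
    by (simp add: sum_distrib_left \<omega>_def Complex.DeMoivre cis_mult algebra_simps)
  ultimately show ?thesis by (simp add: geometric_sum)
qed

lemma
  fixes N :: nat and p :: int
  assumes "N > 0" "\<not> int N dvd p"
  shows sum_cos_arith_progression_eq_0: "(\<Sum>j<N. cos (2*pi*p*j/N + \<phi>)) = 0"
    and sum_sin_arith_progression_eq_0: "(\<Sum>j<N. sin (2*pi*p*j/N + \<phi>)) = 0"
  using arg_cong[OF sum_cis_arith_progression_eq_0[OF assms, of \<phi>], of Re]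
    arg_cong[OF sum_cis_arith_progression_eq_0[OF assms, of \<phi>], of Im]
  by simp_all

definition circle_coord :: "nat \<Rightarrow> real \<Rightarrow> real" where
  "circle_coord c t = (if even c then cos t else sin t)"

definition polygon_angle :: "nat \<Rightarrow> nat \<Rightarrow> real" where
  "polygon_angle m k = 2 * pi * real k / real m"

lemma
  fixes m p :: nat
  assumes "0 < p" "p < m"
  shows sum_cos_polygon_angle: "(\<Sum>k<m. cos (p * polygon_angle m k)) = 0"
    and sum_sin_polygon_angle: "(\<Sum>k<m. sin (p * polygon_angle m k)) = 0"
proof -
  have "\<not> int m dvd int p"
    using assms by (auto dest: zdvd_imp_le)
  moreover have "p * polygon_angle m k = 2 * pi * int p * k / m" for k
    by (simp add: polygon_angle_def)
  ultimately show "(\<Sum>k<m. cos (p * polygon_angle m k)) = 0" "(\<Sum>k<m. sin (p * polygon_angle m k)) = 0"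
    using sum_cos_arith_progression_eq_0[of m "int p" 0] sum_sin_arith_progression_eq_0[of m "int p" 0]
      assms by simp_all
qed

lemma inj_on_cis_polygon_angle: "0 < m \<Longrightarrow> inj_on (\<lambda>k. cis (polygon_angle m k)) {..<m}"
  using Complex.bij_betw_roots_unity[of m] by (simp add: bij_betw_def polygon_angle_def)

lemma sin_cube: "sin x ^ 3 = (3 * sin x - sin (3 * x)) / 4" for x :: real
proof -
  have "sin (3 * x) = sin (2 * x + x)" by (simp add: distrib_right[symmetric])
  also have "\<dots> = 2 * sin x * (cos x)\<^sup>2 + (1 - 2 * (sin x)\<^sup>2) * sin x"
    unfolding sin_add sin_double cos_double_sin by (simp add: power2_eq_square)
  also have "\<dots> = 3 * sin x - 4 * sin x ^ 3"
    unfolding cos_squared_eq by (simp add: power2_eq_square power3_eq_cube algebra_simps)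
  finally show ?thesis by simp
qed

lemma cos_cube: "cos x ^ 3 = (3 * cos x + cos (3 * x)) / 4" for x :: real
  using cos_treble_cos[of x] by simp

lemma polygon_first_moment:
  assumes "1 < m"
  shows "(\<Sum>k<m. circle_coord a (polygon_angle m k)) = 0"
  using sum_cos_polygon_angle[of 1 m] sum_sin_polygon_angle[of 1 m] assms
  by (cases "even a") (simp_all add: circle_coord_def)

lemma polygon_second_moment:
  assumes "2 < m"
  shows "(\<Sum>k<m. circle_coord a (polygon_angle m k) * circle_coord b (polygon_angle m k))
    = (if even a = even b then m / 2 else 0)"
proof -
  let ?\<alpha> = "polygon_angle m"
  have "(\<Sum>k<m. cos (?\<alpha> k) * cos (?\<alpha> k)) = m / 2"
    "(\<Sum>k<m. sin (?\<alpha> k) * sin (?\<alpha> k)) = m / 2"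
    "(\<Sum>k<m. sin (?\<alpha> k) * cos (?\<alpha> k)) = 0"
    "(\<Sum>k<m. cos (?\<alpha> k) * sin (?\<alpha> k)) = 0"
    using sum_cos_polygon_angle[of 2 m] sum_sin_polygon_angle[of 2 m] assms
    by (simp_all add: cos_times_cos sin_times_sin sin_times_cos cos_times_sin sum.distrib
        sum_subtractf sum_divide_distrib[symmetric] mult_2[symmetric])
  then show ?thesis
    by (cases "even a"; cases "even b") (simp_all add: circle_coord_def)
qed

lemma polygon_third_moment:
  assumes "3 < m"
  shows "(\<Sum>k<m. circle_coord a (polygon_angle m k) * circle_coord b (polygon_angle m k)
    * circle_coord c (polygon_angle m k)) = 0"
proof -
  let ?\<alpha> = "polygon_angle m"
  have S: "(\<Sum>k<m. cos (?\<alpha> k)) = 0" "(\<Sum>k<m. sin (?\<alpha> k)) = 0"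
    "(\<Sum>k<m. cos (3 * ?\<alpha> k)) = 0" "(\<Sum>k<m. sin (3 * ?\<alpha> k)) = 0"
    using sum_cos_polygon_angle[of 1 m] sum_sin_polygon_angle[of 1 m]
      sum_cos_polygon_angle[of 3 m] sum_sin_polygon_angle[of 3 m] assms
    by simp_all
  have cubes: "(\<Sum>k<m. cos (?\<alpha> k) ^ 3) = 0" "(\<Sum>k<m. sin (?\<alpha> k) ^ 3) = 0"
    using S by (simp_all add: cos_cube sin_cube sum.distrib sum_subtractf
        sum_divide_distrib[symmetric] sum_distrib_left[symmetric])
  have "cos t * cos t * sin t = sin t - sin t ^ 3" "cos t * sin t * sin t = cos t - cos t ^ 3"
    for t :: real
    using sin_cos_squared_add3[of t] by algebra+
  with S cubes have "(\<Sum>k<m. cos (?\<alpha> k) * cos (?\<alpha> k) * sin (?\<alpha> k)) = 0"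
    "(\<Sum>k<m. cos (?\<alpha> k) * sin (?\<alpha> k) * sin (?\<alpha> k)) = 0"
    by (simp_all add: sum_subtractf)
  with cubes show ?thesis
    by (cases "even a"; cases "even b"; cases "even c")
      (simp_all add: circle_coord_def power3_eq_cube mult_ac)
qed

definition midpoint_angle :: "nat \<Rightarrow> nat \<Rightarrow> real" where
  "midpoint_angle N j = pi * (2 * real j + 1) / (2 * real N)"

lemma
  fixes P :: int
  assumes "P \<noteq> 0" "\<bar>P\<bar> < int N"
  shows sum_cos_midpoint_angle: "(\<Sum>j<N. cos (2 * P * midpoint_angle N j)) = 0"
    and sum_sin_midpoint_angle: "(\<Sum>j<N. sin (2 * P * midpoint_angle N j)) = 0"
proof -
  have "N > 0" using assms by linarith
  moreover have "\<not> int N dvd P"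
    using dvd_imp_le_int[OF assms(1)] assms(2) by force
  moreover have "2 * P * midpoint_angle N j = 2*pi*P*j/N + pi*P/N" for j
    using \<open>N > 0\<close> by (simp add: midpoint_angle_def field_simps)
  ultimately show "(\<Sum>j<N. cos (2 * P * midpoint_angle N j)) = 0"
    "(\<Sum>j<N. sin (2 * P * midpoint_angle N j)) = 0"
    using sum_cos_arith_progression_eq_0 sum_sin_arith_progression_eq_0 by simp_all
qed

lemma sum_circle_coord_midpoint_angle:
  fixes p q :: nat
  assumes "odd p" "odd q" "p < N" "q < N"
  shows "(\<Sum>j<N. circle_coord a (p * midpoint_angle N j) * circle_coord b (q * midpoint_angle N j))
    = (if p = q \<and> even a = even b then N / 2 else 0)"
proof -
  let ?x = "\<lambda>j. p * midpoint_angle N j" and ?y = "\<lambda>j. q * midpoint_angle N j"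
  define P Q :: int where "P = (int p + int q) div 2" and "Q = (int p - int q) div 2"
  have P: "int p + int q = 2 * P" and Q: "int p - int q = 2 * Q"
    using assms(1,2) by (simp_all add: P_def Q_def)
  have plus: "(\<Sum>j<N. cos (?x j + ?y j)) = 0" "(\<Sum>j<N. sin (?x j + ?y j)) = 0"
  proof -
    have "?x j + ?y j = (real p + real q) * midpoint_angle N j" for j
      by (simp add: algebra_simps)
    also have "real p + real q = 2 * P"
      using arg_cong[OF P, of real_of_int] by simp
    moreover have "P \<noteq> 0" "\<bar>P\<bar> < int N" using P assms odd_pos[OF assms(1)] by auto
    ultimately show "(\<Sum>j<N. cos (?x j + ?y j)) = 0" "(\<Sum>j<N. sin (?x j + ?y j)) = 0"
      using sum_cos_midpoint_angle sum_sin_midpoint_angle by simp_all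
  qed
  have minus: "(\<Sum>j<N. cos (?x j - ?y j)) = (if p = q then N else 0)"
    "(\<Sum>j<N. sin (?x j - ?y j)) = 0"
  proof -
    have "?x j - ?y j = (real p - real q) * midpoint_angle N j" for j
      by (simp add: algebra_simps)
    also have "real p - real q = 2 * Q"
      using arg_cong[OF Q, of real_of_int] by simp
    finally have diff: "?x j - ?y j = 2 * Q * midpoint_angle N j" for j .
    have "\<bar>Q\<bar> < int N" using Q assms by auto
    then show "(\<Sum>j<N. cos (?x j - ?y j)) = (if p = q then N else 0)"
      "(\<Sum>j<N. sin (?x j - ?y j)) = 0"
      unfolding diff using sum_cos_midpoint_angle sum_sin_midpoint_angle Q by (cases "Q = 0"; simp)+
  qed
  show ?thesis
    using plus minus
    by (cases "even a"; cases "even b")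
      (auto simp: circle_coord_def cos_times_cos sin_times_sin sin_times_cos cos_times_sin
        sum.distrib sum_subtractf sum_divide_distrib[symmetric])
qed

lemma midpoint_angle_bounds:
  assumes "j < N"
  shows "0 < midpoint_angle N j" "midpoint_angle N j < pi"
proof -
  have eq: "midpoint_angle N j = pi * ((2 * real j + 1) / (2 * real N))"
    by (simp add: midpoint_angle_def)
  have pos: "0 < (2 * real j + 1) / (2 * real N)" and lt1: "(2 * real j + 1) / (2 * real N) < 1"
    using assms by (auto simp: field_simps)
  show "0 < midpoint_angle N j"
    unfolding eq using pi_gt_zero pos by (rule mult_pos_pos)
  show "midpoint_angle N j < pi"
    unfolding eq using mult_strict_left_mono[OF lt1 pi_gt_zero] by (simp only: mult_1_right)
qed

lemma midpoint_angle_eq_iff: "0 < N \<Longrightarrow> midpoint_angle N j = midpoint_angle N j' \<longleftrightarrow> j = j'"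
  by (simp add: midpoint_angle_def)

lemma cis_polygon_angle_neq_midpoint_angle:
  assumes "odd m" "0 < N"
  shows "cis (polygon_angle m k) \<noteq> cis (midpoint_angle N j)"
    and "cis (polygon_angle m k) \<noteq> - cis (midpoint_angle N j)"
proof -
  \<comment> \<open>the power \<open>2 N m\<close> sends the polygon vertex to \<open>1\<close> and both \<open>\<plusminus>cis\<close> of the midpoint angle to \<open>-1\<close>\<close>
  have "cis (polygon_angle m k) ^ (2 * N * m) = cis (2 * pi * real (2 * N * k))"
    using assms odd_pos[OF assms(1)] by (simp add: Complex.DeMoivre polygon_angle_def field_simps)
  also have "\<dots> = 1"
    by (rule cis_multiple_2pi) (rule Ints_of_nat)
  finally have z: "cis (polygon_angle m k) ^ (2 * N * m) = 1" .
  have "real (2 * N * m) * midpoint_angle N j = real (m * (2 * j + 1)) * pi"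
    using assms by (simp add: midpoint_angle_def field_simps)
  then have "cis (midpoint_angle N j) ^ (2 * N * m) = cis (real (m * (2 * j + 1)) * pi)"
    by (simp only: Complex.DeMoivre)
  also have "\<dots> = -1"
    using assms(1) by (simp add: complex_eq_iff del: of_nat_mult of_nat_add)
  finally have w: "cis (midpoint_angle N j) ^ (2 * N * m) = -1" .
  show "cis (polygon_angle m k) \<noteq> cis (midpoint_angle N j)"
    using z w by auto
  show "cis (polygon_angle m k) \<noteq> - cis (midpoint_angle N j)"
    using z w by (auto simp: power_minus_even)
qed

section \<open>Averages over the sphere\<close>

lemma radial_absolutely_integrable_on_ball:
  fixes G :: "'a::euclidean_space \<Rightarrow> real"
  assumes "continuous_on UNIV G"
  shows "(\<lambda>x. G (x /\<^sub>R norm x)) absolutely_integrable_on ball 0 1"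
proof -
  obtain B where B: "\<And>y. y \<in> cball 0 1 \<Longrightarrow> norm (G y) \<le> B"
    using compact_continuous_image[OF continuous_on_subset[OF assms] compact_cball]
    by (meson bounded_iff compact_imp_bounded imageI subset_UNIV)
  have "(\<lambda>x. G (sgn x)) \<in> borel_measurable borel"
    using borel_measurable_continuous_onI[OF assms] by measurable
  then have "(\<lambda>x. G (x /\<^sub>R norm x)) \<in> borel_measurable (lebesgue_on (ball 0 1))"
    using measurable_comp[OF id_borel_measurable_lebesgue_on] by (simp add: o_def sgn_div_norm)
  then show ?thesis
  proof (rule measurable_bounded_by_integrable_imp_absolutely_integrable)
    fix x :: 'a
    have "x /\<^sub>R norm x \<in> cball 0 1"
      by (cases "x = 0") auto
    then show "norm (G (x /\<^sub>R norm x)) \<le> B" using B by blast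
  qed (auto intro: integrable_on_const)
qed

lemma radial_integrable_on_ball:
  fixes G :: "'a::euclidean_space \<Rightarrow> real"
  assumes "continuous_on UNIV G"
  shows "(\<lambda>x. G (x /\<^sub>R norm x)) integrable_on ball 0 1"
  using radial_absolutely_integrable_on_ball[OF assms] set_lebesgue_integral_eq_integral(1) by blast

lemma sphere_avg_sum:
  fixes g :: "'a \<Rightarrow> real^'n::finite \<Rightarrow> real"
  assumes "finite A" "\<And>a. a \<in> A \<Longrightarrow> continuous_on UNIV (g a)"
  shows "sphere_avg (\<lambda>x. \<Sum>a\<in>A. g a x) = (\<Sum>a\<in>A. sphere_avg (g a))"
  unfolding sphere_avg_def
  using integral_sum[OF assms(1) radial_integrable_on_ball[OF assms(2)]]
  by (simp add: sum_divide_distrib)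

lemma sphere_avg_cmult: "sphere_avg (\<lambda>x. c * g x) = c * sphere_avg g"
  by (simp add: sphere_avg_def)

lemma sphere_avg_cong:
  assumes "\<And>x. x \<in> sphere 0 1 \<Longrightarrow> f x = g x"
  shows "sphere_avg f = sphere_avg g"
proof -
  have "integral (ball 0 1) (\<lambda>x. f (x /\<^sub>R norm x)) = integral (ball 0 1) (\<lambda>x. g (x /\<^sub>R norm x))"
    by (rule integral_spike[of "{0}"]) (auto simp: assms)
  then show ?thesis by (simp add: sphere_avg_def)
qed

lemma sphere_avg_const [simp]: "sphere_avg (\<lambda>x::real^'n::finite. c) = c"
proof -
  have "integral (ball (0::real^'n) 1) (\<lambda>x. c * 1) = c * measure lebesgue (ball (0::real^'n) 1)"
    by (simp only: integral_mult_right lmeasure_integral[symmetric] lmeasurable_ball)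
  then show ?thesis by (simp add: sphere_avg_def)
qed

definition signed_perm :: "('n \<Rightarrow> 'n) \<Rightarrow> ('n \<Rightarrow> real) \<Rightarrow> real^'n \<Rightarrow> real^'n" where
  "signed_perm \<sigma> s x = (\<chi> k. s k * x $ \<sigma> k)"

locale signed_involution =
  fixes \<sigma> :: "'n::finite \<Rightarrow> 'n" and s :: "'n \<Rightarrow> real"
  assumes involutive: "\<sigma> (\<sigma> k) = k"
    and sign: "s k = 1 \<or> s k = -1"
    and sign_involutive: "s (\<sigma> k) = s k"
begin

lemma sign_mult_self: "s k * s k = 1"
  using sign[of k] by auto

lemma sign_mult: "s k * t = (if s k = 1 then t else - t)"
  using sign[of k] by auto

lemma signed_perm_signed_perm [simp]: "signed_perm \<sigma> s (signed_perm \<sigma> s x) = x"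
  by (simp add: signed_perm_def vec_eq_iff involutive sign_involutive mult.assoc[symmetric]
      sign_mult_self)

lemma image_signed_perm: "signed_perm \<sigma> s ` A = signed_perm \<sigma> s -` A"
proof (intro set_eqI iffI)
  fix y assume "y \<in> signed_perm \<sigma> s -` A"
  then show "y \<in> signed_perm \<sigma> s ` A"
    by (metis image_eqI signed_perm_signed_perm vimageE)
qed auto

lemma linear_signed_perm: "linear (signed_perm \<sigma> s)"
  by (rule linearI) (simp_all add: signed_perm_def vec_eq_iff algebra_simps)

lemma bij_\<sigma>: "bij \<sigma>"
  by (metis involutive involuntory_imp_bij)

lemma norm_signed_perm [simp]: "norm (signed_perm \<sigma> s x) = norm x"
proof -
  have "(\<Sum>k\<in>UNIV. (signed_perm \<sigma> s x $ k)\<^sup>2) = (\<Sum>k\<in>UNIV. (x $ \<sigma> k)\<^sup>2)"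
    by (intro sum.cong refl)
      (simp add: signed_perm_def power_mult_distrib power2_eq_square[of "s _"] sign_mult_self)
  also have "\<dots> = (\<Sum>k\<in>UNIV. (x $ k)\<^sup>2)"
    using sum.reindex[of \<sigma> UNIV "\<lambda>k. (x $ k)\<^sup>2"] bij_\<sigma> by (simp add: bij_def)
  finally show ?thesis by (simp add: norm_vec_def L2_set_def)
qed

lemma signed_perm_cbox:
  "signed_perm \<sigma> s ` cbox u v =
     cbox (\<chi> k. if s k = 1 then u $ \<sigma> k else - v $ \<sigma> k) (\<chi> k. if s k = 1 then v $ \<sigma> k else - u $ \<sigma> k)"
    (is "_ = cbox ?l ?h")
proof -
  have "signed_perm \<sigma> s y \<in> cbox u v \<longleftrightarrow> y \<in> cbox ?l ?h" for y
  proof -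
    have "signed_perm \<sigma> s y \<in> cbox u v \<longleftrightarrow> (\<forall>k. u $ \<sigma> k \<le> s k * y $ k \<and> s k * y $ k \<le> v $ \<sigma> k)"
      unfolding mem_box_cart signed_perm_def
      by (metis (no_types, lifting) involutive sign_involutive vec_lambda_beta)
    also have "\<dots> \<longleftrightarrow> y \<in> cbox ?l ?h"
      unfolding mem_box_cart vec_lambda_beta sign_mult by (intro iff_allI) auto
    finally show ?thesis .
  qed
  then show ?thesis
    unfolding image_signed_perm by auto
qed

(* in the form required by has_integral_twiddle *)
lemma content_signed_perm_cbox:
  "Henstock_Kurzweil_Integration.content (signed_perm \<sigma> s ` cbox u v)
    = 1 * Henstock_Kurzweil_Integration.content (cbox u v)"
proof -
  have "(\<Prod>k\<in>UNIV. (if s k = 1 then v $ \<sigma> k else - u $ \<sigma> k) - (if s k = 1 then u $ \<sigma> k else - v $ \<sigma> k))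
      = (\<Prod>k\<in>UNIV. v $ \<sigma> k - u $ \<sigma> k)"
    by (intro prod.cong refl) auto
  also have "\<dots> = (\<Prod>k\<in>UNIV. v $ k - u $ k)"
    using prod.reindex[of \<sigma> UNIV "\<lambda>k. v $ k - u $ k"] bij_\<sigma> by (simp add: bij_def)
  finally show ?thesis
    using signed_perm_cbox[of u v] by (simp add: content_cbox_if_cart) (metis image_is_empty)
qed

lemma integral_ball_signed_perm:
  fixes F :: "real^'n \<Rightarrow> real"
  assumes "F integrable_on ball 0 1"
  shows "integral (ball 0 1) (\<lambda>x. F (signed_perm \<sigma> s x)) = integral (ball 0 1) F"
proof -
  define a b :: "real^'n" where "a = (\<chi> k. -1)" and "b = (\<chi> k. 1)"
  have ball_sub: "ball 0 1 \<subseteq> cbox a b"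
  proof
    fix x :: "real^'n" assume "x \<in> ball 0 1"
    then have "\<bar>x $ k\<bar> \<le> 1" for k
      using component_le_norm_cart[of x k] by simp
    then show "x \<in> cbox a b"
      by (simp add: mem_box_cart a_def b_def abs_le_iff)
  qed
  have box_inv: "signed_perm \<sigma> s ` cbox a b = cbox a b"
    unfolding signed_perm_cbox by (rule arg_cong2[where f = cbox]) (simp_all add: a_def b_def vec_eq_iff)
  let ?F0 = "\<lambda>x. if x \<in> ball 0 1 then F x else 0"
  have "(?F0 has_integral integral (ball 0 1) F) (cbox a b)"
    using assms has_integral_restrict[OF ball_sub] by blast
  then have "((\<lambda>x. ?F0 (signed_perm \<sigma> s x)) has_integral (1 / 1) *\<^sub>R integral (ball 0 1) F)
      (signed_perm \<sigma> s ` cbox a b)"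
    using linear_continuous_at[OF linear_linear[THEN iffD2, OF linear_signed_perm]] signed_perm_cbox content_signed_perm_cbox
    by (intro has_integral_twiddle) auto
  then have "((\<lambda>x. if x \<in> ball 0 1 then F (signed_perm \<sigma> s x) else 0) has_integral integral (ball 0 1) F)
      (cbox a b)"
    by (simp add: box_inv del: has_integral_restrict)
  then show ?thesis
    using has_integral_restrict[OF ball_sub] by blast
qed

lemma sphere_avg_signed_perm:
  assumes "continuous_on UNIV G"
  shows "sphere_avg (\<lambda>x. G (signed_perm \<sigma> s x)) = sphere_avg G"
proof -
  have "signed_perm \<sigma> s x /\<^sub>R norm (signed_perm \<sigma> s x) = signed_perm \<sigma> s (x /\<^sub>R norm x)" for x
    using linear_cmul[OF linear_signed_perm] by simp
  then show ?thesis
    using integral_ball_signed_perm[OF radial_integrable_on_ball[OF assms]]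
    by (simp add: sphere_avg_def)
qed

end

lemma sphere_avg_odd:
  fixes G :: "real^'n::finite \<Rightarrow> real"
  assumes "continuous_on UNIV G" and odd: "\<And>x. G (\<chi> k. if k = p then - x $ k else x $ k) = - G x"
  shows "sphere_avg G = 0"
proof -
  interpret signed_involution id "\<lambda>k. if k = p then -1 else 1"
    by unfold_locales auto
  have "signed_perm id (\<lambda>k. if k = p then -1 else 1) x = (\<chi> k. if k = p then - x $ k else x $ k)" for x
    by (simp add: signed_perm_def vec_eq_iff)
  then have "sphere_avg G = sphere_avg (\<lambda>x. - 1 * G x)"
    using sphere_avg_signed_perm[OF assms(1)] by (simp add: odd)
  then show ?thesis
    unfolding sphere_avg_cmult by simp
qed

lemma sphere_avg_coord: "sphere_avg (\<lambda>x::real^'n::finite. x $ i) = 0"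
  by (rule sphere_avg_odd[where p = i]) (auto intro: continuous_intros)

lemma sphere_avg_coord_square_eq:
  fixes i j :: "'n::finite"
  shows "sphere_avg (\<lambda>x::real^'n::finite. x $ i * x $ i) = sphere_avg (\<lambda>x. x $ j * x $ j)"
proof -
  interpret signed_involution "Transposition.transpose i j" "\<lambda>k. 1"
    by unfold_locales auto
  have "continuous_on UNIV (\<lambda>x::real^'n. x $ j * x $ j)"
    by (intro continuous_intros)
  from sphere_avg_signed_perm[OF this] show ?thesis
    by (simp add: signed_perm_def)
qed

lemma sphere_avg_coord_mult:
  "sphere_avg (\<lambda>x::real^'n::finite. x $ i * x $ j) = (if i = j then 1 / CARD('n) else 0)"
proof (cases "i = j")
  case True
  have "1 = sphere_avg (\<lambda>x::real^'n. \<Sum>k\<in>UNIV. x $ k * x $ k)"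
    by (subst sphere_avg_cong[where g = "\<lambda>x. 1"]) (auto simp: norm_eq_1 inner_vec_def inner_real_def)
  also have "\<dots> = (\<Sum>k\<in>UNIV. sphere_avg (\<lambda>x::real^'n. x $ k * x $ k))"
    by (intro sphere_avg_sum continuous_intros) auto
  also have "\<dots> = (\<Sum>k\<in>(UNIV::'n set). sphere_avg (\<lambda>x::real^'n. x $ i * x $ i))"
    by (intro sum.cong refl sphere_avg_coord_square_eq)
  finally show ?thesis
    using True by (simp add: field_simps)
next
  case False
  have "continuous_on UNIV (\<lambda>x::real^'n. x $ i * x $ j)"
    by (intro continuous_intros)
  then have "sphere_avg (\<lambda>x::real^'n. x $ i * x $ j) = 0"
    by (rule sphere_avg_odd[where p = i]) (use False in auto)
  then show ?thesis using False by simp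
qed

lemma sphere_avg_coord_mult3: "sphere_avg (\<lambda>x::real^'n::finite. x $ i * x $ j * x $ k) = 0"
proof -
  have "continuous_on UNIV (\<lambda>x::real^'n. x $ i * x $ j * x $ k)"
    by (intro continuous_intros)
  then show ?thesis
    \<comment> \<open>one of the three indices occurs an odd number of times\<close>
    by (rule sphere_avg_odd[where p = "if i = j then k else if i = k then j else i"]) auto
qed

section \<open>Spherical 3-designs from moments\<close>

lemma prod_power_eq_prod_list:
  fixes a :: "'i::finite \<Rightarrow> nat"
  obtains "is" where "length is = sum a UNIV"
    and "\<And>x :: 'i \<Rightarrow> 'a::comm_monoid_mult. (\<Prod>i\<in>UNIV. x i ^ a i) = prod_list (map x is)"
proof -
  obtain xs :: "'i list" where xs: "set xs = UNIV" "distinct xs"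
    using finite_distinct_list[of "UNIV :: 'i set"] by auto
  define "is" where "is = concat (map (\<lambda>i. replicate (a i) i) xs)"
  have "length is = sum a UNIV"
    unfolding is_def length_concat xs(1)[symmetric] sum.distinct_set_conv_list[OF xs(2)]
    by (simp add: o_def)
  have "prod_list (map x is) = prod_list (map (\<lambda>i. x i ^ a i) xs)" for x :: "'i \<Rightarrow> 'a"
    unfolding is_def by (induction xs) simp_all
  then have "(\<Prod>i\<in>UNIV. x i ^ a i) = prod_list (map x is)" for x :: "'i \<Rightarrow> 'a"
    unfolding xs(1)[symmetric] prod.distinct_set_conv_list[OF xs(2)] by simp
  with \<open>length is = sum a UNIV\<close> show thesis by (rule that)
qed

lemma spherical_design_3I:
  fixes X :: "(real^'n::finite) set"
  assumes X: "finite X" "X \<noteq> {}" "X \<subseteq> sphere 0 1"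
    and first: "\<And>i. (\<Sum>x\<in>X. x $ i) = 0"
    and second: "\<And>i j. (\<Sum>x\<in>X. x $ i * x $ j) = (if i = j then card X / CARD('n) else 0)"
    and third: "\<And>i j k. (\<Sum>x\<in>X. x $ i * x $ j * x $ k) = 0"
  shows "spherical_design 3 X"
proof -
  have "card X > 0" using X by (simp add: card_gt_0_iff)
  have prod_list_avg: "(\<Sum>x\<in>X. prod_list (map (\<lambda>i. x $ i) is)) / card X
      = sphere_avg (\<lambda>x. prod_list (map (\<lambda>i. x $ i) is))" if len: "length is \<le> 3" for "is"
  proof -
    consider "is = []" | i where "is = [i]" | i j where "is = [i, j]" | i j k where "is = [i, j, k]"
      using len by (auto simp: le_Suc_eq length_Suc_conv numeral_3_eq_3)
    then show ?thesis
    proof cases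
      case (3 i j)
      then show ?thesis using \<open>card X > 0\<close> by (simp add: second sphere_avg_coord_mult)
    next
      case (4 i j k)
      then show ?thesis using sphere_avg_coord_mult3[of i j k] third[of i j k] by (simp add: mult.assoc)
    qed (use \<open>card X > 0\<close> first in \<open>simp_all add: sphere_avg_coord\<close>)
  qed
  have monomial_avg: "(\<Sum>x\<in>X. \<Prod>i\<in>UNIV. x $ i ^ a i) / card X = sphere_avg (\<lambda>x. \<Prod>i\<in>UNIV. x $ i ^ a i)"
    if "sum a UNIV \<le> 3" for a :: "'n \<Rightarrow> nat"
  proof -
    obtain "is" where "length is = sum a UNIV"
      and "\<And>x :: 'n \<Rightarrow> real. (\<Prod>i\<in>UNIV. x i ^ a i) = prod_list (map x is)"
      using prod_power_eq_prod_list[of a] by blast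
    then show ?thesis using prod_list_avg that by simp
  qed
  show ?thesis
    unfolding spherical_design_def
  proof (intro conjI allI impI X)
    fix f :: "real^'n \<Rightarrow> real"
    assume "poly_deg_le 3 f"
    then obtain A c where A: "finite A" "\<forall>a\<in>A. sum a UNIV \<le> 3"
      and f: "f = (\<lambda>x. \<Sum>a\<in>A. c a * (\<Prod>i\<in>UNIV. x $ i ^ a i))"
      unfolding poly_deg_le_def by blast
    have "(\<Sum>x\<in>X. f x) / card X = (\<Sum>a\<in>A. c a * ((\<Sum>x\<in>X. \<Prod>i\<in>UNIV. x $ i ^ a i) / card X))"
      unfolding f by (simp add: sum.swap[of _ X] sum_distrib_left sum_divide_distrib)
    also have "\<dots> = (\<Sum>a\<in>A. sphere_avg (\<lambda>x. c a * (\<Prod>i\<in>UNIV. x $ i ^ a i)))"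
      using A(2) by (simp add: monomial_avg sphere_avg_cmult)
    also have "\<dots> = sphere_avg f"
      unfolding f by (rule sphere_avg_sum[symmetric]) (use A in \<open>auto intro!: continuous_intros\<close>)
    finally show "(\<Sum>x\<in>X. f x) / card X = sphere_avg f" .
  qed
qed

lemma spherical_design_3_union_antipodal:
  fixes P F :: "nat \<Rightarrow> real^'n::finite" and m N :: nat
  defines "X \<equiv> P ` {..<m} \<union> F ` {..<N} \<union> uminus ` F ` {..<N}"
  assumes "0 < m" and inj: "inj_on P {..<m}" "inj_on F {..<N}"
    and disj: "P ` {..<m} \<inter> (F ` {..<N} \<union> uminus ` F ` {..<N}) = {}"
      "F ` {..<N} \<inter> uminus ` F ` {..<N} = {}"
    and norm: "\<And>k. k < m \<Longrightarrow> norm (P k) = 1" "\<And>j. j < N \<Longrightarrow> norm (F j) = 1"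
    and first: "\<And>i. (\<Sum>k<m. P k $ i) = 0"
    and second: "\<And>i i'. (\<Sum>k<m. P k $ i * P k $ i') + 2 * (\<Sum>j<N. F j $ i * F j $ i')
      = (if i = i' then (m + 2 * N) / CARD('n) else 0)"
    and third: "\<And>i i' i''. (\<Sum>k<m. P k $ i * P k $ i' * P k $ i'') = 0"
  shows "spherical_design 3 X \<and> card X = m + 2 * N"
proof -
  have inj_neg: "inj_on (\<lambda>j. - F j) {..<N}"
    using inj(2) by (simp add: inj_on_def)
  have sum_X: "(\<Sum>x\<in>X. h x) = (\<Sum>k<m. h (P k)) + ((\<Sum>j<N. h (F j)) + (\<Sum>j<N. h (- F j)))"
    for h :: "real^'n \<Rightarrow> 'a::comm_monoid_add"
  proof -
    have "sum h X = sum h (P ` {..<m}) + (sum h (F ` {..<N}) + sum h ((\<lambda>j. - F j) ` {..<N}))"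
      using disj unfolding X_def Un_assoc image_image by (simp add: sum.union_disjoint)
    then show ?thesis
      using inj inj_neg by (simp add: sum.reindex)
  qed
  have card_X: "card X = m + 2 * N"
    using sum_X[of "\<lambda>_. 1 :: nat"] by simp
  have "spherical_design 3 X"
  proof (rule spherical_design_3I)
    show "finite X" "X \<noteq> {}"
      using \<open>0 < m\<close> by (auto simp: X_def)
    show "X \<subseteq> sphere 0 1"
      using norm by (auto simp: X_def)
    show "(\<Sum>x\<in>X. x $ i) = 0" for i
      using first by (simp add: sum_X sum_negf)
    show "(\<Sum>x\<in>X. x $ i * x $ i') = (if i = i' then card X / CARD('n) else 0)" for i i'
      using second[of i i'] by (simp add: sum_X card_X)
    show "(\<Sum>x\<in>X. x $ i * x $ i' * x $ i'') = 0" for i i' i''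
      using third by (simp add: sum_X sum_negf)
  qed
  with card_X show ?thesis by blast
qed

lemma vec_lambda_reindex_eq_iff:
  assumes "bij_betw e UNIV {..<m}"
  shows "(\<chi> i. f (e i)) = (\<chi> i. g (e i)) \<longleftrightarrow> (\<forall>c<m. f c = g c)"
proof -
  have range: "range e = {..<m}"
    using assms by (simp add: bij_betw_def)
  show ?thesis
    unfolding vec_eq_iff vec_lambda_beta
  proof
    assume "\<forall>i. f (e i) = g (e i)"
    then show "\<forall>c<m. f c = g c"
      using range by (metis imageE lessThan_iff)
  qed (use range in auto)
qed

lemma norm_vec_lambda_reindex:
  assumes "bij_betw e UNIV {..<m}"
  shows "norm (\<chi> i. f (e i)) = sqrt (\<Sum>c<m. (f c)\<^sup>2)"
  using sum.reindex_bij_betw[OF assms, of "\<lambda>c. (f c)\<^sup>2"] by (simp add: norm_vec_def L2_set_def)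

section \<open>A regular pentagon and an antipodal frame\<close>

lemma sum_lessThan_double: "(\<Sum>c<2 * n. g c) = (\<Sum>s<n. g (2 * s) + g (Suc (2 * s)))"
  by (induction n) (simp_all add: algebra_simps)

locale pentagon_frame =
  fixes r N :: nat
  assumes r_pos: "0 < r" and frame_size: "2 * r \<le> N" and design_size: "5 * r \<le> 2 * N + 5"
begin

definition tau :: real where "tau = real (2 * N + 5) / real (2 * r)"

(* Frequency 1 goes to the last pair, whose radius stays positive even when n = 5r makes the
   radius of the first pair vanish; its coordinates separate the points. *)
definition freq :: "nat \<Rightarrow> nat" where "freq s = 2 * (r - s) - 1"

definition radius :: "nat \<Rightarrow> real" where
  "radius s = sqrt ((if s = 0 then tau - 5 / 2 else tau) / N)"

definition frame :: "nat \<Rightarrow> nat \<Rightarrow> real" where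
  "frame j c = radius (c div 2) * circle_coord c (freq (c div 2) * midpoint_angle N j)"

definition pentagon :: "nat \<Rightarrow> nat \<Rightarrow> real" where
  "pentagon k c = (if c < 2 then circle_coord c (polygon_angle 5 k) else 0)"

lemma N_pos: "0 < N"
  using r_pos frame_size by linarith

lemma tau_ge: "5 / 2 \<le> tau"
  using r_pos design_size by (simp add: tau_def field_simps)

lemma radius_square: "(radius s)\<^sup>2 = (if s = 0 then tau - 5 / 2 else tau) / N"
  using tau_ge N_pos by (simp add: radius_def)

lemma freq_odd: "s < r \<Longrightarrow> odd (freq s)"
  by (simp add: freq_def)

lemma freq_less: "freq s < N"
  using frame_size r_pos by (simp add: freq_def)

lemma freq_eq_iff: "s < r \<Longrightarrow> t < r \<Longrightarrow> freq s = freq t \<longleftrightarrow> s = t"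
  by (auto simp: freq_def)

lemma frame_second_moment:
  assumes "a < 2 * r" "b < 2 * r"
  shows "(\<Sum>j<N. frame j a * frame j b) = (if a = b then (radius (a div 2))\<^sup>2 * N / 2 else 0)"
proof -
  have "a div 2 < r" "b div 2 < r" using assms by auto
  then have "(freq (a div 2) = freq (b div 2) \<and> even a = even b) \<longleftrightarrow> a = b"
    by (metis freq_eq_iff dvd_mult_div_cancel odd_two_times_div_two_succ)
  then show ?thesis
    using sum_circle_coord_midpoint_angle[OF freq_odd freq_odd freq_less freq_less, of "a div 2" "b div 2" a b]
      \<open>a div 2 < r\<close> \<open>b div 2 < r\<close>
    by (auto simp: frame_def sum_distrib_left[symmetric] mult_ac power2_eq_square)
qed

lemma pentagon_second_moment:
  "(\<Sum>k<5. pentagon k a * pentagon k b) = (if a = b \<and> a < 2 then 5 / 2 else 0)"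
proof (cases "a < 2 \<and> b < 2")
  case True
  then have "even a = even b \<longleftrightarrow> a = b" by (auto simp: less_2_cases_iff)
  with True show ?thesis
    using polygon_second_moment[of 5 a b] by (simp add: pentagon_def)
qed (auto simp: pentagon_def)

lemma second_moment:
  assumes "a < 2 * r" "b < 2 * r"
  shows "(\<Sum>k<5. pentagon k a * pentagon k b) + 2 * (\<Sum>j<N. frame j a * frame j b)
    = (if a = b then tau else 0)"
  using N_pos by (auto simp: pentagon_second_moment frame_second_moment[OF assms] radius_square
      div_eq_0_iff)

lemma pentagon_first_moment: "(\<Sum>k<5. pentagon k a) = 0"
  using polygon_first_moment[of 5 a] by (cases "a < 2") (simp_all add: pentagon_def)

lemma pentagon_third_moment: "(\<Sum>k<5. pentagon k a * pentagon k b * pentagon k c) = 0"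
  using polygon_third_moment[of 5 a b c]
  by (cases "a < 2 \<and> b < 2 \<and> c < 2") (auto simp: pentagon_def)

lemma frame_norm: "(\<Sum>c<2 * r. (frame j c)\<^sup>2) = 1"
proof -
  have "(\<Sum>c<2 * r. (frame j c)\<^sup>2) = (\<Sum>s<r. (radius s)\<^sup>2)"
    unfolding sum_lessThan_double
    by (simp add: frame_def circle_coord_def power_mult_distrib distrib_left[symmetric])
  also have "\<dots> = (\<Sum>s<r. tau / N - (if s = 0 then 5 / (2 * N) else 0))"
    by (intro sum.cong refl) (simp add: radius_square diff_divide_distrib)
  also have "\<dots> = r * (tau / N) - 5 / (2 * N)"
    using r_pos by (simp add: sum_subtractf)
  also have "\<dots> = 1"
    using r_pos N_pos by (simp add: tau_def field_simps)
  finally show ?thesis .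
qed

lemma pentagon_norm: "(\<Sum>c<2 * r. (pentagon k c)\<^sup>2) = 1"
proof -
  have "(\<Sum>c<2 * r. (pentagon k c)\<^sup>2) = (\<Sum>s<r. if s = 0 then 1 else 0)"
    unfolding sum_lessThan_double by (intro sum.cong refl) (simp add: pentagon_def circle_coord_def)
  then show ?thesis using r_pos by simp
qed

lemma radius_top_pos: "0 < radius (r - 1)"
proof -
  have "0 < (if r - 1 = 0 then tau - 5 / 2 else tau)"
    using tau_ge N_pos r_pos by (auto simp: tau_def field_simps)
  then show ?thesis using N_pos by (simp add: radius_def)
qed

lemma frame_top:
  "frame j (2 * r - 2) = radius (r - 1) * cos (midpoint_angle N j)"
  "frame j (2 * r - 1) = radius (r - 1) * sin (midpoint_angle N j)"
proof -
  have "(2 * r - 2) div 2 = r - 1" "(2 * r - 1) div 2 = r - 1" "freq (r - 1) = 1"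
    using r_pos by (auto simp: freq_def)
  moreover have "even (2 * r - 2)" "odd (2 * r - 1)"
    using r_pos by auto
  ultimately show "frame j (2 * r - 2) = radius (r - 1) * cos (midpoint_angle N j)"
    "frame j (2 * r - 1) = radius (r - 1) * sin (midpoint_angle N j)"
    by (simp_all add: frame_def circle_coord_def)
qed

lemma frame_top_pos: "j < N \<Longrightarrow> 0 < frame j (2 * r - 1)"
  unfolding frame_top using radius_top_pos sin_gt_zero midpoint_angle_bounds by simp

lemma frame_inj:
  assumes "j < N" "j' < N" "\<forall>c<2 * r. frame j c = frame j' c"
  shows "j = j'"
proof -
  have "frame j (2 * r - 2) = frame j' (2 * r - 2)"
    using assms(3) r_pos by simp
  then have "cos (midpoint_angle N j) = cos (midpoint_angle N j')"
    unfolding frame_top using radius_top_pos by simp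
  then have "midpoint_angle N j = midpoint_angle N j'"
    using cos_inj_pi midpoint_angle_bounds[OF assms(1)] midpoint_angle_bounds[OF assms(2)]
    by (meson less_imp_le)
  then show ?thesis using N_pos midpoint_angle_eq_iff by blast
qed

lemma frame_neq_neg_frame: "j < N \<Longrightarrow> j' < N \<Longrightarrow> \<exists>c<2 * r. frame j c \<noteq> - frame j' c"
  using frame_top_pos[of j] frame_top_pos[of j'] r_pos
  by (intro exI[of _ "2 * r - 1"]) auto

lemma pentagon_inj:
  assumes "k < 5" "k' < 5" "\<forall>c<2 * r. pentagon k c = pentagon k' c"
  shows "k = k'"
proof -
  have "pentagon k 0 = pentagon k' 0" "pentagon k 1 = pentagon k' 1"
    using assms(3) r_pos by auto
  then have "cis (polygon_angle 5 k) = cis (polygon_angle 5 k')"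
    by (simp add: pentagon_def circle_coord_def complex_eq_iff)
  then show ?thesis
    using inj_on_cis_polygon_angle[of 5] assms(1,2) by (auto dest: inj_onD)
qed

lemma pentagon_neq_frame:
  assumes "k < 5" "j < N"
  shows "\<exists>c<2 * r. pentagon k c \<noteq> frame j c" "\<exists>c<2 * r. pentagon k c \<noteq> - frame j c"
proof -
  consider "r = 1" | "pentagon k (2 * r - 1) = 0"
    using r_pos by (cases "r = 1") (auto simp: pentagon_def)
  then have "(\<exists>c<2 * r. pentagon k c \<noteq> frame j c) \<and> (\<exists>c<2 * r. pentagon k c \<noteq> - frame j c)"
  proof cases
    case 1
    have "radius 0 = 1"
      unfolding radius_def tau_def using 1 N_pos by (simp add: field_simps)
    then have "frame j 0 = cos (midpoint_angle N j)" "frame j 1 = sin (midpoint_angle N j)"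
      using frame_top 1 by auto
    moreover have "pentagon k 0 = cos (polygon_angle 5 k)" "pentagon k 1 = sin (polygon_angle 5 k)"
      by (simp_all add: pentagon_def circle_coord_def)
    ultimately have "pentagon k 0 = frame j 0 \<and> pentagon k 1 = frame j 1
        \<longleftrightarrow> cis (polygon_angle 5 k) = cis (midpoint_angle N j)"
      "pentagon k 0 = - frame j 0 \<and> pentagon k 1 = - frame j 1
        \<longleftrightarrow> cis (polygon_angle 5 k) = - cis (midpoint_angle N j)"
      by (auto simp: complex_eq_iff)
    moreover have "cis (polygon_angle 5 k) \<noteq> cis (midpoint_angle N j)"
      "cis (polygon_angle 5 k) \<noteq> - cis (midpoint_angle N j)"
      using cis_polygon_angle_neq_midpoint_angle[of 5 N k j] N_pos by simp_all
    moreover have "0 < 2 * r" "1 < 2 * r"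
      using 1 by auto
    ultimately show ?thesis
      by blast
  next
    case 2
    then show ?thesis
      using frame_top_pos[OF assms(2)] r_pos by (auto intro!: exI[of _ "2 * r - 1"])
  qed
  then show "\<exists>c<2 * r. pentagon k c \<noteq> frame j c" "\<exists>c<2 * r. pentagon k c \<noteq> - frame j c"
    by blast+
qed

lemma spherical_design_exists:
  assumes "CARD('n::finite) = 2 * r"
  shows "\<exists>X :: (real^'n) set. spherical_design 3 X \<and> card X = 2 * N + 5"
proof -
  obtain e :: "'n \<Rightarrow> nat" where e: "bij_betw e UNIV {..<2 * r}"
    using ex_bij_betw_finite_nat[of "UNIV :: 'n set"] assms by (auto simp: atLeast0LessThan)
  define P F :: "nat \<Rightarrow> real^'n"
    where "P k = (\<chi> i. pentagon k (e i))" and "F j = (\<chi> i. frame j (e i))" for k j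
  have neg_F: "- (\<chi> i. frame j (e i)) = (\<chi> i. - frame j (e i))" for j
    by (simp add: vec_eq_iff)
  have e_eq_iff: "e i = e i' \<longleftrightarrow> i = i'" for i i'
    using e by (auto simp: bij_betw_def inj_on_def)
  have e_less: "e i < 2 * r" for i
    using e by (auto simp: bij_betw_def)
  have "spherical_design 3 (P ` {..<5} \<union> F ` {..<N} \<union> uminus ` F ` {..<N}) \<and>
    card (P ` {..<5} \<union> F ` {..<N} \<union> uminus ` F ` {..<N}) = 5 + 2 * N"
  proof (rule spherical_design_3_union_antipodal)
    show "inj_on P {..<5}" "inj_on F {..<N}"
      using pentagon_inj frame_inj
      unfolding inj_on_def P_def F_def vec_lambda_reindex_eq_iff[OF e] by auto
    have "P k \<noteq> F j" "P k \<noteq> - F j" if "k < 5" "j < N" for k j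
      using pentagon_neq_frame[OF that] vec_lambda_reindex_eq_iff[OF e, of "pentagon k" "frame j"]
        vec_lambda_reindex_eq_iff[OF e, of "pentagon k" "\<lambda>c. - frame j c"]
      unfolding P_def F_def neg_F by auto
    then show "P ` {..<5} \<inter> (F ` {..<N} \<union> uminus ` F ` {..<N}) = {}"
      by auto
    have "F j \<noteq> - F j'" if "j < N" "j' < N" for j j'
      using frame_neq_neg_frame[OF that] vec_lambda_reindex_eq_iff[OF e, of "frame j" "\<lambda>c. - frame j' c"]
      unfolding F_def neg_F by auto
    then show "F ` {..<N} \<inter> uminus ` F ` {..<N} = {}"
      by auto
    show "norm (P k) = 1" "norm (F j) = 1" for k j
      by (simp_all add: P_def F_def norm_vec_lambda_reindex[OF e] pentagon_norm frame_norm)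
    show "(\<Sum>k<5. P k $ i) = 0" for i
      by (simp add: P_def pentagon_first_moment)
    show "(\<Sum>k<5. P k $ i * P k $ i' * P k $ i'') = 0" for i i' i''
      by (simp add: P_def pentagon_third_moment)
    show "(\<Sum>k<5. P k $ i * P k $ i') + 2 * (\<Sum>j<N. F j $ i * F j $ i')
      = (if i = i' then (5 + 2 * N) / CARD('n) else 0)" for i i'
      using second_moment[OF e_less e_less, of i i'] assms
      by (simp add: P_def F_def e_eq_iff tau_def)
  qed simp
  then show ?thesis by auto
qed

end

theorem proposition6p2:
  fixes d n :: nat
  assumes "odd d" and "odd n"
    and "real n \<ge> max (5 * (real d + 1) / 2) (2 * real d + 7)"
    and "CARD('n::finite) = d + 1"
  shows "\<exists>X :: (real^'n) set. spherical_design 3 X \<and> card X = n"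
proof -
  define r N where "r = (d + 1) div 2" and "N = (n - 5) div 2"
  have dim: "CARD('n) = 2 * r" "d + 1 = 2 * r"
    using assms(1,4) by (simp_all add: r_def)
  have size: "n = 2 * N + 5"
    using assms(2,3) by (simp add: N_def)
  have "real (5 * (d + 1)) \<le> real (2 * n)" "real (2 * d + 7) \<le> real n"
    using assms(3) by auto
  then have "5 * (d + 1) \<le> 2 * n" "2 * d + 7 \<le> n"
    by (simp_all only: of_nat_le_iff)
  then interpret pentagon_frame r N
    using dim size by unfold_locales (simp_all add: algebra_simps)
  show ?thesis
    using spherical_design_exists[OF dim(1)] size by simp
qed

end
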